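(* Let $\Omega_n=\dfrac{\pi^{n/2}}{\Gamma\left(\frac n2+1\right)}$ and define \[ \theta(n)=\frac13+\frac{1}{18n}-\frac{31}{810n^2},\qquad \nu(n)=\theta(n)-\frac{139}{9720n^3}. \] Then \[ \frac{1}{\sqrt{\pi(n+\theta(n))}}\left(\frac{2\pi e}{n}\right)^{\frac n2}<\Omega_n \] for every integer $n\ge3$, and \[ \Omega_n<\frac{1}{\sqrt{\pi(n+\nu(n))}}\left(\frac{2\pi e}{n}\right)^{\frac n2} \] for every integer $n\ge1$.
   Context: $\Omega_n$ is the volume of the unit ball in $\mathbb{R}^n$; $\Gamma$ is Euler's gamma function. *)

theory Defs
  imports "HOL-Analysis.Analysis"
begin

definition Omega :: "nat \<Rightarrow> real" where
  "Omega n = pi powr (real n / 2) / Gamma (real n / 2 + 1)"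

definition theta :: "nat \<Rightarrow> real" where
  "theta n = 1/3 + 1 / (18 * real n) - 31 / (810 * (real n)^2)"

definition nu :: "nat \<Rightarrow> real" where
  "nu n = theta n - 139 / (9720 * (real n)^3)"

end

theory Submission
  imports Defs "HOL-Real_Asymp.Real_Asymp"
begin

text \<open>
  Write $S(m) = \ln\Gamma(m/2+1) - \ln\bigl(\sqrt{2\pi}\,(m/2)^{(m+1)/2} e^{-m/2}\bigr)$ for the error
  in Stirling's formula. Taking logarithms, the two inequalities become $C(n) < S(n) < B(n)$ with
  $B(m) = \frac12\ln(1 + \theta(m)/m)$ and $C(m) = \frac12\ln(1 + \nu(m)/m)$.
  The functional equation of $\Gamma$ gives $S(m) - S(m+2) = \frac{m+1}2\ln\frac{m+2}m - 1$, and
  $S(m + 2k) \to 0$. So it suffices that $B$ decreases from $m$ to $m+2$ by more, and $C$ by less,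
  than $S$ does. Each of these two increment differences tends to $0$ together with its derivative and
  has a positive second derivative (after clearing denominators, a polynomial with positive
  coefficients), hence is positive. This works for $m \ge 5$ resp. $m \ge 1$; the cases $n = 3, 4$
  are numerical.

  Stirling's formula $S(m + 2k) \to 0$ itself comes from the same recursion: $S$ is squeezed between
  $S - B$ increasing and $S - C$ decreasing along $m, m+2, \dots$, so it converges on even and on odd
  arguments; Gauss's product for $\Gamma(1/2)$ shows the two limits agree, and Legendre's duplication
  formula forces their common value to be $0$.
\<close>

section \<open>Monotonicity from derivatives and increments\<close>

lemma neg_if_deriv_pos_tendsto_zero:
  fixes g g' :: "real \<Rightarrow> real"
  assumes deriv: "\<And>x. x \<ge> a \<Longrightarrow> (g has_real_derivative g' x) (at x)"
    and pos: "\<And>x. x \<ge> a \<Longrightarrow> g' x > 0"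
    and lim: "(g \<longlongrightarrow> 0) at_top"
    and "x \<ge> a"
  shows "g x < 0"
proof -
  have less: "g y < g z" if "a \<le> y" "y < z" for y z
    using that by (intro DERIV_pos_imp_increasing[OF \<open>y < z\<close>]) (meson deriv pos order_trans)
  have "g (x + 1) \<le> 0"
  proof (rule tendsto_lowerbound[OF lim])
    show "\<forall>\<^sub>F y in at_top. g (x + 1) \<le> g y"
      using eventually_ge_at_top[of "x + 1"]
      by eventually_elim (use less \<open>x \<ge> a\<close> in \<open>fastforce simp: order_le_less\<close>)
  qed simp
  moreover have "g x < g (x + 1)" using less \<open>x \<ge> a\<close> by simp
  ultimately show ?thesis by simp
qed

lemma pos_if_deriv2_pos_tendsto_zero:
  fixes g g' g'' :: "real \<Rightarrow> real"
  assumes "\<And>x. x \<ge> a \<Longrightarrow> (g has_real_derivative g' x) (at x)"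
    and "\<And>x. x \<ge> a \<Longrightarrow> (g' has_real_derivative g'' x) (at x)"
    and "\<And>x. x \<ge> a \<Longrightarrow> g'' x > 0"
    and "(g \<longlongrightarrow> 0) at_top" "(g' \<longlongrightarrow> 0) at_top"
    and "x \<ge> a"
  shows "g x > 0"
proof -
  have "g' y < 0" if "y \<ge> a" for y
    using assms(2,3,5) that by (rule neg_if_deriv_pos_tendsto_zero)
  then have "(\<lambda>x. - g x) x < 0"
    using assms(1,4,6)
    by (intro neg_if_deriv_pos_tendsto_zero[where g' = "\<lambda>x. - g' x"])
       (auto intro: DERIV_minus simp: tendsto_minus_cancel_left[symmetric])
  then show ?thesis by simp
qed

lemma LIMSEQ_progression_at_top:
  fixes f :: "real \<Rightarrow> 'a::topological_space"
  assumes "(f \<longlongrightarrow> l) at_top" "d > 0"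
  shows "(\<lambda>k. f (x + d * real k)) \<longlonglongrightarrow> l"
  by (rule filterlim_compose[OF assms(1)])
     (intro filterlim_tendsto_add_at_top[OF tendsto_const] filterlim_tendsto_pos_mult_at_top[OF tendsto_const]
       filterlim_real_sequentially assms(2))

lemma less_if_decrements_less:
  fixes u v :: "nat \<Rightarrow> real"
  assumes "\<And>k. u k - u (Suc k) < v k - v (Suc k)" "u \<longlonglongrightarrow> l" "v \<longlonglongrightarrow> l"
  shows "u 0 < v 0"
proof -
  have "decseq (\<lambda>k. v k - u k)"
    using assms(1) by (intro decseq_SucI) (simp add: algebra_simps less_imp_le)
  moreover have "(\<lambda>k. v k - u k) \<longlonglongrightarrow> 0"
    using tendsto_diff[OF assms(3,2)] by simp
  ultimately have "0 \<le> v 1 - u 1" by (rule decseq_ge)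
  with assms(1)[of 0] show ?thesis by simp
qed

lemma ln_Gamma_nat_plus_asymp:
  fixes a :: real
  assumes "a > 0"
  shows "(\<lambda>j. ln (Gamma (real j + 1 + a)) - ln (fact j) - a * ln (real j)) \<longlonglongrightarrow> 0"
proof -
  have "a \<notin> \<int>\<^sub>\<le>\<^sub>0" using assms by (auto dest: nonpos_Ints_nonpos)
  have Gamma_pos: "Gamma a > 0" "Gamma (real j + 1 + a) > 0" for j
    using assms by (simp_all add: Gamma_real_pos)
  have "ln (Gamma a) - ln (Gamma_series a j) = ln (Gamma (real j + 1 + a)) - ln (fact j) - a * ln (real j)" for j
  proof -
    have "pochhammer a (j + 1) = Gamma (real j + 1 + a) / Gamma a"
      using pochhammer_Gamma[of a] \<open>a \<notin> \<int>\<^sub>\<le>\<^sub>0\<close> by (simp add: add_ac)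
    then have "Gamma_series a j = fact j * exp (a * ln (real j)) * Gamma a / Gamma (real j + 1 + a)"
      unfolding Gamma_series_def by simp
    then show ?thesis
      using Gamma_pos(1) Gamma_pos(2)[of j] by (simp add: ln_mult_pos ln_div)
  qed
  moreover have "(\<lambda>j. ln (Gamma a) - ln (Gamma_series a j)) \<longlonglongrightarrow> ln (Gamma a) - ln (Gamma a)"
    using Gamma_pos by (intro tendsto_intros Gamma_series_LIMSEQ) auto
  ultimately show ?thesis by simp
qed

lemma Gamma_legendre_duplication_real:
  fixes z :: real
  assumes "z > 0"
  shows "Gamma z * Gamma (z + 1/2) = exp ((1 - 2 * z) * ln 2) * sqrt pi * Gamma (2 * z)"
proof -
  have half: "complex_of_real z + 1/2 = complex_of_real (z + 1/2)" by simp
  have "complex_of_real z \<notin> \<int>\<^sub>\<le>\<^sub>0" "complex_of_real z + 1/2 \<notin> \<int>\<^sub>\<le>\<^sub>0"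
    unfolding half of_real_in_nonpos_Ints_iff using assms by (auto dest: nonpos_Ints_nonpos)
  from Gamma_legendre_duplication[OF this]
  have "complex_of_real (Gamma z * Gamma (z + 1/2)) =
        complex_of_real (exp ((1 - 2 * z) * ln 2) * sqrt pi * Gamma (2 * z))"
    by (simp add: Gamma_complex_of_real[symmetric] exp_of_real[symmetric])
  then show ?thesis by (simp only: of_real_eq_iff)
qed

section \<open>The error in Stirling's formula\<close>

definition stirling_err :: "real \<Rightarrow> real" where
  "stirling_err m = ln (Gamma (m / 2 + 1)) - (m + 1) / 2 * (ln m - ln 2) + m / 2 - (ln 2 + ln pi) / 2"

definition stirling_step :: "real \<Rightarrow> real" where
  "stirling_step m = (m + 1) / 2 * (ln (m + 2) - ln m) - 1"

lemma stirling_err_step: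
  assumes "m > 0" shows "stirling_err (m + 2) = stirling_err m - stirling_step m"
proof -
  have "m / 2 + 1 \<notin> \<int>\<^sub>\<le>\<^sub>0" using assms by (auto dest: nonpos_Ints_nonpos)
  then have Gamma_eq: "Gamma ((m + 2) / 2 + 1) = (m + 2) / 2 * Gamma (m / 2 + 1)"
    using Gamma_plus1[of "m / 2 + 1"] by (simp add: add_divide_distrib)
  have "Gamma (m / 2 + 1) > 0" using Gamma_real_pos[of "m / 2 + 1"] assms by simp
  then have "ln (Gamma ((m + 2) / 2 + 1)) = ln ((m + 2) / 2) + ln (Gamma (m / 2 + 1))"
    unfolding Gamma_eq using assms by (intro ln_mult_pos) auto
  then have "ln (Gamma ((m + 2) / 2 + 1)) = ln (m + 2) - ln 2 + ln (Gamma (m / 2 + 1))"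
    using assms by (simp add: ln_div)
  then show ?thesis
    unfolding stirling_err_def stirling_step_def by (simp add: field_simps)
qed

definition theta_poly :: "real \<Rightarrow> real" where
  "theta_poly m = 810 * m^3 + 270 * m^2 + 45 * m - 31"

definition theta_poly' :: "real \<Rightarrow> real" where
  "theta_poly' m = 2430 * m^2 + 540 * m + 45"

definition theta_poly'' :: "real \<Rightarrow> real" where
  "theta_poly'' m = 4860 * m + 540"

definition nu_poly :: "real \<Rightarrow> real" where
  "nu_poly m = 9720 * m^4 + 3240 * m^3 + 540 * m^2 - 372 * m - 139"

definition nu_poly' :: "real \<Rightarrow> real" where
  "nu_poly' m = 38880 * m^3 + 9720 * m^2 + 1080 * m - 372"

definition nu_poly'' :: "real \<Rightarrow> real" where
  "nu_poly'' m = 116640 * m^2 + 19440 * m + 1080"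

lemma theta_poly_has_deriv [derivative_intros]:
  "(f has_real_derivative f') (at x within s) \<Longrightarrow>
     ((\<lambda>x. theta_poly (f x)) has_real_derivative theta_poly' (f x) * f') (at x within s)"
  unfolding theta_poly_def theta_poly'_def
  by (auto intro!: derivative_eq_intros simp: algebra_simps power2_eq_square)

lemma theta_poly'_has_deriv [derivative_intros]:
  "(f has_real_derivative f') (at x within s) \<Longrightarrow>
     ((\<lambda>x. theta_poly' (f x)) has_real_derivative theta_poly'' (f x) * f') (at x within s)"
  unfolding theta_poly'_def theta_poly''_def
  by (auto intro!: derivative_eq_intros simp: algebra_simps)

lemma nu_poly_has_deriv [derivative_intros]:
  "(f has_real_derivative f') (at x within s) \<Longrightarrow>
     ((\<lambda>x. nu_poly (f x)) has_real_derivative nu_poly' (f x) * f') (at x within s)"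
  unfolding nu_poly_def nu_poly'_def
  by (auto intro!: derivative_eq_intros simp: algebra_simps power2_eq_square power3_eq_cube)

lemma nu_poly'_has_deriv [derivative_intros]:
  "(f has_real_derivative f') (at x within s) \<Longrightarrow>
     ((\<lambda>x. nu_poly' (f x)) has_real_derivative nu_poly'' (f x) * f') (at x within s)"
  unfolding nu_poly'_def nu_poly''_def
  by (auto intro!: derivative_eq_intros simp: algebra_simps power2_eq_square)

lemma theta_poly_pos:
  assumes "m \<ge> 1" shows "theta_poly m > 0"
proof -
  have "m^3 \<ge> 1" "m^2 \<ge> 1" using assms by (simp_all add: one_le_power)
  with assms show ?thesis unfolding theta_poly_def by linarith
qed

lemma nu_poly_eq: "nu_poly m = 12 * m * theta_poly m - 139"
  unfolding nu_poly_def theta_poly_def by algebra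

lemma nu_poly_pos:
  assumes "m \<ge> 1" shows "nu_poly m > 0"
proof -
  have "m^4 \<ge> m" "m^3 \<ge> 1" "m^2 \<ge> 1"
    using assms by (simp_all add: one_le_power power_increasing[of 1 4 m, simplified])
  with assms show ?thesis unfolding nu_poly_def by linarith
qed

lemma real_plus_theta_eq: "n \<ge> 1 \<Longrightarrow> real n + theta n = theta_poly (real n) / (810 * (real n)^2)"
  unfolding theta_def theta_poly_def by (simp add: field_simps power2_eq_square power3_eq_cube)

lemma real_plus_nu_eq: "n \<ge> 1 \<Longrightarrow> real n + nu n = nu_poly (real n) / (9720 * (real n)^3)"
  unfolding nu_def theta_def nu_poly_def
  by (simp add: field_simps power2_eq_square power3_eq_cube eval_nat_numeral)

definition theta_corr :: "real \<Rightarrow> real" where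
  "theta_corr m = (ln (theta_poly m) - ln 810 - 3 * ln m) / 2"

definition nu_corr :: "real \<Rightarrow> real" where
  "nu_corr m = (ln (nu_poly m) - ln 9720 - 4 * ln m) / 2"

lemma ln_div_theta_corr:
  assumes "n \<ge> 1" shows "ln ((real n + theta n) / real n) / 2 = theta_corr (real n)"
proof -
  have "(real n + theta n) / real n = theta_poly (real n) / (810 * real n ^ 3)"
    unfolding real_plus_theta_eq[OF assms] using assms by (simp add: field_simps power2_eq_square power3_eq_cube)
  then show ?thesis
    using assms theta_poly_pos[of "real n"] by (simp add: theta_corr_def ln_div ln_mult_pos ln_realpow)
qed

lemma ln_div_nu_corr:
  assumes "n \<ge> 1" shows "ln ((real n + nu n) / real n) / 2 = nu_corr (real n)"
proof -
  have "(real n + nu n) / real n = nu_poly (real n) / (9720 * real n ^ 4)"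
    unfolding real_plus_nu_eq[OF assms] using assms by (simp add: field_simps power2_eq_square power3_eq_cube eval_nat_numeral)
  then show ?thesis
    using assms nu_poly_pos[of "real n"] by (simp add: nu_corr_def ln_div ln_mult_pos ln_realpow)
qed

lemma nu_corr_le_theta_corr:
  assumes "m \<ge> 1" shows "nu_corr m \<le> theta_corr m"
proof -
  have "ln (nu_poly m) \<le> ln (12 * m * theta_poly m)"
    using assms nu_poly_pos[OF assms] unfolding nu_poly_eq by simp
  also have "\<dots> = ln 12 + ln m + ln (theta_poly m)"
    using assms theta_poly_pos[OF assms] by (simp add: ln_mult)
  finally show ?thesis
    unfolding nu_corr_def theta_corr_def using ln_mult[of 12 "810::real"] by simp
qed

lemma theta_corr_tendsto_zero: "(theta_corr \<longlongrightarrow> 0) at_top"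
  unfolding theta_corr_def[abs_def] theta_poly_def by real_asymp

lemma nu_corr_tendsto_zero: "(nu_corr \<longlongrightarrow> 0) at_top"
  unfolding nu_corr_def[abs_def] nu_poly_def by real_asymp

section \<open>Comparing the increments\<close>

definition theta_gap :: "real \<Rightarrow> real" where
  "theta_gap m = theta_corr m - theta_corr (m + 2) - stirling_step m"

definition theta_gap' :: "real \<Rightarrow> real" where
  "theta_gap' m = theta_poly' m / theta_poly m / 2 - theta_poly' (m + 2) / theta_poly (m + 2) / 2
     - (ln (m + 2) - ln m) / 2 + (m - 2) / (m * (m + 2))"

definition theta_gap'' :: "real \<Rightarrow> real" where
  "theta_gap'' m = (theta_poly'' m * theta_poly m - theta_poly' m ^ 2) / theta_poly m ^ 2 / 2
     - (theta_poly'' (m + 2) * theta_poly (m + 2) - theta_poly' (m + 2) ^ 2) / theta_poly (m + 2) ^ 2 / 2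
     + (6 * m + 4) / (m ^ 2 * (m + 2) ^ 2)"

definition nu_gap :: "real \<Rightarrow> real" where
  "nu_gap m = stirling_step m - nu_corr m + nu_corr (m + 2)"

definition nu_gap' :: "real \<Rightarrow> real" where
  "nu_gap' m = (ln (m + 2) - ln m) / 2 - (m - 3) / (m * (m + 2))
     + nu_poly' (m + 2) / nu_poly (m + 2) / 2 - nu_poly' m / nu_poly m / 2"

definition nu_gap'' :: "real \<Rightarrow> real" where
  "nu_gap'' m = (nu_poly'' (m + 2) * nu_poly (m + 2) - nu_poly' (m + 2) ^ 2) / nu_poly (m + 2) ^ 2 / 2
     - (nu_poly'' m * nu_poly m - nu_poly' m ^ 2) / nu_poly m ^ 2 / 2
     - (8 * m + 6) / (m ^ 2 * (m + 2) ^ 2)"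

lemma theta_gap_has_deriv:
  assumes "m \<ge> 1" shows "(theta_gap has_real_derivative theta_gap' m) (at m)"
proof -
  have "theta_poly m > 0" "theta_poly (m + 2) > 0" using assms by (simp_all add: theta_poly_pos)
  moreover have "m > 0" using assms by simp
  ultimately show ?thesis
    unfolding theta_gap_def[abs_def] theta_corr_def stirling_step_def
    by (auto intro!: derivative_eq_intros) (simp add: theta_gap'_def divide_simps; algebra)
qed

lemma theta_gap'_has_deriv:
  assumes "m \<ge> 1" shows "(theta_gap' has_real_derivative theta_gap'' m) (at m)"
proof -
  have "theta_poly m > 0" "theta_poly (m + 2) > 0" using assms by (simp_all add: theta_poly_pos)
  moreover have "m > 0" using assms by simp
  ultimately show ?thesis
    unfolding theta_gap'_def[abs_def]
    by (auto intro!: derivative_eq_intros) (simp add: theta_gap''_def divide_simps; algebra)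
qed

lemma nu_gap_has_deriv:
  assumes "m \<ge> 1" shows "(nu_gap has_real_derivative nu_gap' m) (at m)"
proof -
  have "nu_poly m > 0" "nu_poly (m + 2) > 0" using assms by (simp_all add: nu_poly_pos)
  moreover have "m > 0" using assms by simp
  ultimately show ?thesis
    unfolding nu_gap_def[abs_def] nu_corr_def stirling_step_def
    by (auto intro!: derivative_eq_intros) (simp add: nu_gap'_def divide_simps; algebra)
qed

lemma nu_gap'_has_deriv:
  assumes "m \<ge> 1" shows "(nu_gap' has_real_derivative nu_gap'' m) (at m)"
proof -
  have "nu_poly m > 0" "nu_poly (m + 2) > 0" using assms by (simp_all add: nu_poly_pos)
  moreover have "m > 0" using assms by simp
  ultimately show ?thesis
    unfolding nu_gap'_def[abs_def]
    by (auto intro!: derivative_eq_intros) (simp add: nu_gap''_def divide_simps; algebra)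
qed

lemma theta_gap''_pos:
  assumes "m \<ge> 5" shows "theta_gap'' m > 0"
proof -
  define t where "t = m - 5"
  define D where "D = 2 * theta_poly m ^ 2 * theta_poly (m + 2) ^ 2 * m ^ 2 * (m + 2) ^ 2"
  have pos: "m > 0" "theta_poly m > 0" "theta_poly (m + 2) > 0"
    using assms by (simp_all add: theta_poly_pos)
  have "theta_gap'' m * D =
      564368302623521828 + t * (3269556347488038012 + t * (3825457419556892520
      + t * (2133555249799202760 + t * (694784887595315640 + t * (142425540411366600
      + t * (18725120569425600 + t * (1538501161694400 + t * (72144887220000
      + t * 1477405980000))))))))"
    using pos unfolding theta_gap''_def D_def
    by (simp add: divide_simps) (unfold t_def theta_poly_def theta_poly'_def theta_poly''_def, algebra)
  also have "\<dots> > 0"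
    using assms unfolding t_def by (intro add_pos_nonneg mult_nonneg_nonneg) auto
  finally have "theta_gap'' m * D > 0" .
  moreover have "D > 0" using pos unfolding D_def by simp
  ultimately show ?thesis by (rule zero_less_mult_pos2)
qed

lemma nu_gap''_pos:
  assumes "m \<ge> 1" shows "nu_gap'' m > 0"
proof -
  define t where "t = m - 1"
  define D where "D = 2 * nu_poly m ^ 2 * nu_poly (m + 2) ^ 2 * m ^ 2 * (m + 2) ^ 2"
  have pos: "m > 0" "nu_poly m > 0" "nu_poly (m + 2) > 0"
    using assms by (simp_all add: nu_poly_pos)
  have "nu_gap'' m * D =
      372458686645310828804 + t * (2662540488318578139440 + t * (8540313740729398173696
      + t * (16251420089833683732864 + t * (20428524017564438434464
      + t * (17867007321846853171968 + t * (11147540567246756904960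
      + t * (4999506958679297955840 + t * (1600056303746054780160
      + t * (356551636199427763200 + t * (52546150408799232000
      + t * (4602008676424089600 + t * 181296718076160000)))))))))))"
    using pos unfolding nu_gap''_def D_def
    by (simp add: divide_simps) (unfold t_def nu_poly_def nu_poly'_def nu_poly''_def, algebra)
  also have "\<dots> > 0"
    using assms unfolding t_def by (intro add_pos_nonneg mult_nonneg_nonneg) auto
  finally have "nu_gap'' m * D > 0" .
  moreover have "D > 0" using pos unfolding D_def by simp
  ultimately show ?thesis by (rule zero_less_mult_pos2)
qed

lemma theta_gap_tendsto_zero: "(theta_gap \<longlongrightarrow> 0) at_top"
  unfolding theta_gap_def[abs_def] theta_corr_def stirling_step_def theta_poly_def by real_asymp

lemma theta_gap'_tendsto_zero: "(theta_gap' \<longlongrightarrow> 0) at_top"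
  unfolding theta_gap'_def[abs_def] theta_poly'_def theta_poly_def by real_asymp

lemma nu_gap_tendsto_zero: "(nu_gap \<longlongrightarrow> 0) at_top"
  unfolding nu_gap_def[abs_def] nu_corr_def stirling_step_def nu_poly_def by real_asymp

lemma nu_gap'_tendsto_zero: "(nu_gap' \<longlongrightarrow> 0) at_top"
  unfolding nu_gap'_def[abs_def] nu_poly'_def nu_poly_def by real_asymp

lemma theta_gap_pos: "m \<ge> 5 \<Longrightarrow> theta_gap m > 0"
  by (rule pos_if_deriv2_pos_tendsto_zero[of 5 theta_gap theta_gap' theta_gap''])
     (simp_all add: theta_gap_has_deriv theta_gap'_has_deriv theta_gap''_pos
        theta_gap_tendsto_zero theta_gap'_tendsto_zero)

lemma nu_gap_pos: "m \<ge> 1 \<Longrightarrow> nu_gap m > 0"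
  by (rule pos_if_deriv2_pos_tendsto_zero[of 1 nu_gap nu_gap' nu_gap''])
     (simp_all add: nu_gap_has_deriv nu_gap'_has_deriv nu_gap''_pos
        nu_gap_tendsto_zero nu_gap'_tendsto_zero)

section \<open>Stirling's formula along arithmetic progressions\<close>

lemma stirling_err_progression_convergent:
  assumes "m \<ge> 5" shows "convergent (\<lambda>k. stirling_err (m + 2 * real k))"
proof -
  define x where "x k = m + 2 * real k" for k
  have x_Suc: "x (Suc k) = x k + 2" and x_ge: "x k \<ge> 5" for k
    using assms by (simp_all add: x_def)
  define u where "u k = stirling_err (x k) - nu_corr (x k)" for k
  define v where "v k = stirling_err (x k) - theta_corr (x k)" for k
  have "u (Suc k) \<le> u k" for k
    using stirling_err_step[of "x k"] nu_gap_pos[of "x k"] x_ge[of k]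
    by (simp add: u_def x_Suc nu_gap_def)
  then have "decseq u" by (rule decseq_SucI)
  have "v k \<le> v (Suc k)" for k
    using stirling_err_step[of "x k"] theta_gap_pos[of "x k"] x_ge[of k]
    by (simp add: v_def x_Suc theta_gap_def)
  then have "incseq v" by (rule incseq_SucI)
  have "v 0 \<le> u k" for k
  proof -
    have "v 0 \<le> v k" using \<open>incseq v\<close> by (simp add: incseq_def)
    also have "\<dots> \<le> u k" using nu_corr_le_theta_corr[of "x k"] x_ge[of k] by (simp add: u_def v_def)
    finally show ?thesis .
  qed
  then obtain L where "u \<longlonglongrightarrow> L"
    using decseq_convergent[OF \<open>decseq u\<close>, of "v 0"] by blast
  moreover have "(\<lambda>k. nu_corr (x k)) \<longlonglongrightarrow> 0"
    unfolding x_def by (intro LIMSEQ_progression_at_top nu_corr_tendsto_zero) simp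
  ultimately have "(\<lambda>k. u k + nu_corr (x k)) \<longlonglongrightarrow> L + 0"
    by (rule tendsto_add)
  then show ?thesis
    unfolding convergent_def u_def x_def by auto
qed

lemma stirling_err_odd_minus_even:
  "(\<lambda>j. stirling_err (2 * real j + 1) - stirling_err (2 * real j)) \<longlonglongrightarrow> 0"
proof -
  define B where "B j = ln (real j) / 2 + (real j + 1/2) * (ln (2 * real j) - ln 2)
      - (real j + 1) * (ln (2 * real j + 1) - ln 2) + 1/2" for j :: nat
  have "stirling_err (2 * real j + 1) - stirling_err (2 * real j) =
      (ln (Gamma (real j + 1 + 1/2)) - ln (fact j) - 1/2 * ln (real j)) + B j" for j
  proof -
    have args: "2 * real j / 2 + 1 = 1 + real j" "(2 * real j + 1) / 2 + 1 = real j + 1 + 1/2"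
      by (simp_all add: field_simps)
    show ?thesis
      unfolding stirling_err_def B_def args Gamma_fact by (simp add: field_simps)
  qed
  moreover have "B \<longlonglongrightarrow> 0" unfolding B_def by real_asymp
  ultimately show ?thesis
    using tendsto_add[OF ln_Gamma_nat_plus_asymp[of "1/2"]] by simp
qed

lemma stirling_err_duplication:
  "(\<lambda>j. stirling_err (2 * real j) + stirling_err (2 * real j + 1) - stirling_err (4 * real j + 2)) \<longlonglongrightarrow> 0"
proof -
  \<comment> \<open>What remains once the duplication formula has cancelled the \<open>\<Gamma>\<close> terms:\<close>
  define T where "T j = (2 * real j + 1) / 2 * (ln (2 * real j + 1) - ln (2 * real j)) - 1/2" for j :: nat
  have "stirling_err (2 * real j) + stirling_err (2 * real j + 1) - stirling_err (4 * real j + 2) = T j" for j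
  proof -
    have "ln (Gamma (real j + 1)) + ln (Gamma (real j + 1 + 1/2)) =
        (1 - 2 * (real j + 1)) * ln 2 + ln pi / 2 + ln (Gamma (2 * (real j + 1)))"
    proof -
      have "Gamma (real j + 1) > 0" "Gamma (real j + 1 + 1/2) > 0" "Gamma (2 * (real j + 1)) > 0"
        by (simp_all add: Gamma_real_pos)
      then show ?thesis
        using arg_cong[OF Gamma_legendre_duplication_real[of "real j + 1"], of ln]
        by (simp add: ln_mult_pos ln_sqrt)
    qed
    moreover have "ln (4 * real j + 2) = ln 2 + ln (2 * real j + 1)"
      using ln_mult_pos[of 2 "2 * real j + 1"] by (simp add: algebra_simps)
    moreover have args: "2 * real j / 2 + 1 = real j + 1" "(2 * real j + 1) / 2 + 1 = real j + 1 + 1/2"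
      "(4 * real j + 2) / 2 + 1 = 2 * (real j + 1)" by (simp_all add: field_simps)
    ultimately show ?thesis
      unfolding stirling_err_def T_def args by (simp add: field_simps)
  qed
  moreover have "T \<longlonglongrightarrow> 0" unfolding T_def by real_asymp
  ultimately show ?thesis by simp
qed

lemma stirling_err_progression_tendsto_zero:
  assumes "n \<ge> 1" shows "(\<lambda>k. stirling_err (real n + 2 * real k)) \<longlonglongrightarrow> 0"
proof -
  obtain L where "(\<lambda>j. stirling_err (2 * real (j + 3))) \<longlonglongrightarrow> L"
    using stirling_err_progression_convergent[of 6] by (auto simp: convergent_def algebra_simps)
  then have even: "(\<lambda>j. stirling_err (2 * real j)) \<longlonglongrightarrow> L" by (rule LIMSEQ_offset)
  obtain L' where "(\<lambda>j. stirling_err (2 * real (j + 2) + 1)) \<longlonglongrightarrow> L'"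
    using stirling_err_progression_convergent[of 5] by (auto simp: convergent_def algebra_simps)
  then have odd: "(\<lambda>j. stirling_err (2 * real j + 1)) \<longlonglongrightarrow> L'" by (rule LIMSEQ_offset)
  have "L' = L"
    using LIMSEQ_unique[OF tendsto_diff[OF odd even] stirling_err_odd_minus_even] by simp
  have "(\<lambda>j. stirling_err (2 * real (2 * j + 1))) \<longlonglongrightarrow> L"
    using LIMSEQ_subseq_LIMSEQ[OF even, of "\<lambda>j. 2 * j + 1"] by (simp add: strict_mono_def o_def)
  then have "(\<lambda>j. stirling_err (4 * real j + 2)) \<longlonglongrightarrow> L"
    by (simp add: algebra_simps)
  then have "(\<lambda>j. stirling_err (2 * real j) + stirling_err (2 * real j + 1) - stirling_err (4 * real j + 2))
      \<longlonglongrightarrow> L + L' - L"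
    using even odd by (intro tendsto_intros)
  then have "L' = 0"
    using stirling_err_duplication LIMSEQ_unique by fastforce
  with \<open>L' = L\<close> have "(\<lambda>j. stirling_err (2 * real j)) \<longlonglongrightarrow> 0" "(\<lambda>j. stirling_err (2 * real j + 1)) \<longlonglongrightarrow> 0"
    using even odd by simp_all
  moreover obtain a where "n = 2 * a \<or> n = 2 * a + 1"
    by (metis odd_two_times_div_two_succ dvd_mult_div_cancel)
  ultimately show ?thesis
    by (auto dest: LIMSEQ_ignore_initial_segment[where k = a] simp: algebra_simps)
qed

lemma stirling_err_lt_theta_corr_ge_5:
  assumes "n \<ge> 5" shows "stirling_err (real n) < theta_corr (real n)"
proof -
  define x where "x k = real n + 2 * real k" for k
  have x_Suc: "x (Suc k) = x k + 2" and x_ge: "x k \<ge> 5" for k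
    using assms by (simp_all add: x_def)
  have "stirling_err (x k) - stirling_err (x (Suc k)) < theta_corr (x k) - theta_corr (x (Suc k))" for k
    using stirling_err_step[of "x k"] theta_gap_pos[of "x k"] x_ge[of k] by (simp add: x_Suc theta_gap_def)
  moreover have "(\<lambda>k. stirling_err (x k)) \<longlonglongrightarrow> 0"
    unfolding x_def using assms by (intro stirling_err_progression_tendsto_zero) simp
  moreover have "(\<lambda>k. theta_corr (x k)) \<longlonglongrightarrow> 0"
    unfolding x_def by (intro LIMSEQ_progression_at_top theta_corr_tendsto_zero) simp
  ultimately have "stirling_err (x 0) < theta_corr (x 0)" by (rule less_if_decrements_less)
  then show ?thesis by (simp add: x_def)
qed

lemma nu_corr_lt_stirling_err:
  assumes "n \<ge> 1" shows "nu_corr (real n) < stirling_err (real n)"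
proof -
  define x where "x k = real n + 2 * real k" for k
  have x_Suc: "x (Suc k) = x k + 2" and x_ge: "x k \<ge> 1" for k
    using assms by (simp_all add: x_def)
  have "nu_corr (x k) - nu_corr (x (Suc k)) < stirling_err (x k) - stirling_err (x (Suc k))" for k
    using stirling_err_step[of "x k"] nu_gap_pos[of "x k"] x_ge[of k] by (simp add: x_Suc nu_gap_def)
  moreover have "(\<lambda>k. nu_corr (x k)) \<longlonglongrightarrow> 0"
    unfolding x_def by (intro LIMSEQ_progression_at_top nu_corr_tendsto_zero) simp
  moreover have "(\<lambda>k. stirling_err (x k)) \<longlonglongrightarrow> 0"
    unfolding x_def using assms by (intro stirling_err_progression_tendsto_zero) simp
  ultimately have "nu_corr (x 0) < stirling_err (x 0)" by (rule less_if_decrements_less)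
  then show ?thesis by (simp add: x_def)
qed

lemma exp_one_le: "exp (1::real) \<le> 5837465777 / 2147483648 + inverse (2 ^ 32)"
  using abs_le_D1[OF e_approx_32] by linarith

lemma stirling_err_3: "stirling_err 3 = 3/2 - ln 3 - ln 2 / 2"
proof -
  have "Gamma (3/2::real) = 1/2 * sqrt pi"
    using Gamma_plus1[of "1/2::real"] Gamma_one_half_real by (force dest: nonpos_Ints_nonpos)
  then have Gamma_5_2: "Gamma (5/2::real) = 3/4 * sqrt pi"
    using Gamma_plus1[of "3/2::real"] by (force dest: nonpos_Ints_nonpos)
  have "ln (Gamma (5/2::real)) = ln 3 - ln 4 + ln pi / 2"
    unfolding Gamma_5_2 by (simp add: ln_mult_pos ln_div ln_sqrt)
  then show ?thesis
    unfolding stirling_err_def using ln_realpow[of 2 2] by (simp add: field_simps)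
qed

lemma stirling_err_4: "stirling_err 4 = 2 - 2 * ln 2 - ln pi / 2"
proof -
  have "Gamma (3::real) = 2"
    using Gamma_fact[of 2, where 'a = real] by (simp add: numeral_eq_Suc)
  moreover have "ln (4::real) = 2 * ln 2" using ln_realpow[of 2 2] by simp
  ultimately show ?thesis unfolding stirling_err_def by (simp add: field_simps)
qed

lemma stirling_err_lt_theta_corr_3: "stirling_err 3 < theta_corr 3"
proof -
  have "exp 3 = exp (1::real) ^ 3" using exp_of_nat_mult[of 3 "1::real"] by simp
  also have "\<dots> \<le> (5837465777 / 2147483648 + inverse (2 ^ 32)) ^ 3"
    by (rule power_mono[OF exp_one_le]) simp
  finally have "exp 3 * 2430 < (48808::real)" by (simp add: power_divide)
  then have "ln (exp 3 * 2430) < ln (48808::real)" by simp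
  then have "3 + ln 3 + ln 810 < ln 24404 + ln (2::real)"
    using ln_mult_pos[of 3 "810::real"] ln_mult_pos[of 24404 "2::real"] by (simp add: ln_mult_pos)
  then show ?thesis
    unfolding stirling_err_3 theta_corr_def theta_poly_def using ln_realpow[of 3 3] by simp
qed

lemma stirling_err_lt_theta_corr_4: "stirling_err 4 < theta_corr 4"
proof -
  have "exp 4 = exp (1::real) ^ 4" using exp_of_nat_mult[of 4 "1::real"] by simp
  also have "\<dots> \<le> (5837465777 / 2147483648 + inverse (2 ^ 32)) ^ 4"
    by (rule power_mono[OF exp_one_le]) simp
  finally have "exp 4 * 3240 < 56309 * (3.141592653588::real)" by (simp add: power_divide)
  also have "\<dots> \<le> 56309 * pi" using pi_approx by simp
  finally have "ln (exp 4 * 3240) < ln (56309 * pi)" by simp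
  then have "4 + 2 * ln 2 + ln 810 < ln 56309 + ln pi"
    using ln_mult_pos[of 4 "810::real"] ln_realpow[of 2 2] by (simp add: ln_mult_pos)
  then show ?thesis
    unfolding stirling_err_4 theta_corr_def theta_poly_def using ln_realpow[of 2 2] by simp
qed

lemma stirling_err_lt_theta_corr:
  assumes "n \<ge> 3" shows "stirling_err (real n) < theta_corr (real n)"
proof -
  consider "n = 3" | "n = 4" | "n \<ge> 5" using assms by linarith
  then show ?thesis
    using stirling_err_lt_theta_corr_3 stirling_err_lt_theta_corr_4 stirling_err_lt_theta_corr_ge_5
    by cases simp_all
qed

lemma Omega_pos: "Omega n > 0"
  using Gamma_real_pos[of "real n / 2 + 1"] unfolding Omega_def by simp

lemma ln_Omega_div_approx:
  assumes "n \<ge> 1" "y > 0"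
  shows "ln (Omega n / (1 / sqrt (pi * y) * (2 * pi * exp 1 / real n) powr (real n / 2)))
    = ln (y / real n) / 2 - stirling_err (real n)"
    (is "ln (Omega n / ?A) = _")
proof -
  have n: "real n > 0" using assms by simp
  have "Gamma (real n / 2 + 1) > 0" using Gamma_real_pos[of "real n / 2 + 1"] by simp
  then have "Gamma (real n / 2 + 1) \<noteq> 0" by (rule less_imp_neq[symmetric])
  then have ln_Omega: "ln (Omega n) = real n / 2 * ln pi - ln (Gamma (real n / 2 + 1))"
    unfolding Omega_def by (simp add: ln_div ln_powr)
  have "?A > 0" and ln_A: "ln ?A = real n / 2 * (ln 2 + ln pi + 1 - ln (real n)) - (ln pi + ln y) / 2"
    using assms n by (simp_all add: ln_mult_pos ln_div ln_sqrt ln_powr field_simps)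
  have "ln (Omega n / ?A) = ln (Omega n) - ln ?A"
    using Omega_pos \<open>?A > 0\<close> by (rule ln_divide_pos)
  also have "\<dots> = ln (y / real n) / 2 - stirling_err (real n)"
    unfolding ln_Omega ln_A stirling_err_def using assms n by (simp add: ln_div field_simps)
  finally show ?thesis .
qed

lemma approx_less_Omega_iff:
  assumes "n \<ge> 1" "y > 0"
  shows "1 / sqrt (pi * y) * (2 * pi * exp 1 / real n) powr (real n / 2) < Omega n
    \<longleftrightarrow> stirling_err (real n) < ln (y / real n) / 2"
    (is "?A < _ \<longleftrightarrow> _")
proof -
  have "?A > 0" using assms by simp
  then have "?A < Omega n \<longleftrightarrow> ln ?A < ln (Omega n)"
    using Omega_pos by (simp only: ln_less_cancel_iff)
  also have "\<dots> \<longleftrightarrow> stirling_err (real n) < ln (y / real n) / 2"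
    using ln_Omega_div_approx[OF assms] ln_divide_pos[OF Omega_pos[of n] \<open>?A > 0\<close>] by linarith
  finally show ?thesis .
qed

lemma Omega_less_approx_iff:
  assumes "n \<ge> 1" "y > 0"
  shows "Omega n < 1 / sqrt (pi * y) * (2 * pi * exp 1 / real n) powr (real n / 2)
    \<longleftrightarrow> ln (y / real n) / 2 < stirling_err (real n)"
    (is "_ < ?A \<longleftrightarrow> _")
proof -
  have "?A > 0" using assms by simp
  then have "Omega n < ?A \<longleftrightarrow> ln (Omega n) < ln ?A"
    using Omega_pos by (simp only: ln_less_cancel_iff)
  also have "\<dots> \<longleftrightarrow> ln (y / real n) / 2 < stirling_err (real n)"
    using ln_Omega_div_approx[OF assms] ln_divide_pos[OF Omega_pos[of n] \<open>?A > 0\<close>] by linarith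
  finally show ?thesis .
qed

theorem theorem3:
  shows "(\<forall>n::nat. n \<ge> 3 \<longrightarrow>
            1 / sqrt (pi * (real n + theta n)) * (2 * pi * exp 1 / real n) powr (real n / 2) < Omega n)
       \<and> (\<forall>n::nat. n \<ge> 1 \<longrightarrow>
            Omega n < 1 / sqrt (pi * (real n + nu n)) * (2 * pi * exp 1 / real n) powr (real n / 2))"
proof (intro conjI allI impI)
  fix n :: nat
  assume "n \<ge> 3"
  then have "n \<ge> 1" by simp
  have "real n + theta n > 0"
    using \<open>n \<ge> 1\<close> theta_poly_pos[of "real n"] by (simp add: real_plus_theta_eq)
  show "1 / sqrt (pi * (real n + theta n)) * (2 * pi * exp 1 / real n) powr (real n / 2) < Omega n"
    unfolding approx_less_Omega_iff[OF \<open>n \<ge> 1\<close> \<open>real n + theta n > 0\<close>] ln_div_theta_corr[OF \<open>n \<ge> 1\<close>]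
    using \<open>n \<ge> 3\<close> by (rule stirling_err_lt_theta_corr)
next
  fix n :: nat
  assume "n \<ge> 1"
  have "real n + nu n > 0"
    using \<open>n \<ge> 1\<close> nu_poly_pos[of "real n"] by (simp add: real_plus_nu_eq)
  show "Omega n < 1 / sqrt (pi * (real n + nu n)) * (2 * pi * exp 1 / real n) powr (real n / 2)"
    unfolding Omega_less_approx_iff[OF \<open>n \<ge> 1\<close> \<open>real n + nu n > 0\<close>] ln_div_nu_corr[OF \<open>n \<ge> 1\<close>]
    using \<open>n \<ge> 1\<close> by (rule nu_corr_lt_stirling_err)
qed

end
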